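(* Let $\mathcal{B}$ be a bicategory and $j,k\in\mathbb{N}$. Suppose given: objects $a_u$ ($0\le u\le j$); $1$-cells $f^z_{uv}\colon a_u\to a_v$ for all $0\le u<v\le j$, $0\le z\le k$; $2$-cells $\alpha^z_{u,u+1}\colon f^{z-1}_{u,u+1}\Rightarrow f^z_{u,u+1}$ for all $0\le u<j$, $1\le z\le k$; and invertible $2$-cells $\iota^z_{uvw}\colon f^z_{vw}\circ f^z_{uv}\Rightarrow f^z_{uw}$ for all $0\le u<v<w\le j$, $0\le z\le k$, satisfying the associativity axiom (A2) below. Then there is a unique family of $2$-cells $\alpha^z_{uv}\colon f^{z-1}_{uv}\Rightarrow f^z_{uv}$ for all $0\le u<u+1<v\le j$, $1\le z\le k$, such that together with the given data (and the given $\alpha^z_{u,u+1}$) the quadruple $\big((a_u),(f^z_{uv}),(\alpha^z_{uv}),(\iota^z_{uvw})\big)$ satisfies axiom (A1) below, i.e. is an element of $\mathcal{N}\mathcal{B}(j,k)$.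
   Context: For a bicategory $\mathcal{B}$ (composition $\circ$ of $1$-cells, horizontal composition $*$ and vertical composition $\cdot$ of $2$-cells, associator $s$) and $(j,k)\in\mathbb{N}^2$, $\mathcal{N}\mathcal{B}(j,k)$ is the set of quadruples $\big((a_u)_{0\le u\le j},(f^z_{uv})_{0\le u<v\le j,\,0\le z\le k},(\alpha^z_{uv})_{0\le u<v\le j,\,1\le z\le k},(\iota^z_{uvw})_{0\le u<v<w\le j,\,0\le z\le k}\big)$ where $a_u$ are objects, $f^z_{uv}\colon a_u\to a_v$ are $1$-cells, $\alpha^z_{uv}\colon f^{z-1}_{uv}\Rightarrow f^z_{uv}$ are $2$-cells and $\iota^z_{uvw}\colon f^z_{vw}\circ f^z_{uv}\Rightarrow f^z_{uw}$ are invertible $2$-cells, satisfying: (A1) for all $u<v<w$ and $1\le z\le k$: $\iota^z_{uvw}\cdot(\alpha^z_{vw}*\alpha^z_{uv})=\alpha^z_{uw}\cdot\iota^{z-1}_{uvw}$; (A2) for all $u<v<w<x$ and $0\le z\le k$: $\iota^z_{uwx}\cdot(1_{f^z_{wx}}*\iota^z_{uvw})\cdot s=\iota^z_{uvx}\cdot(\iota^z_{vwx}*1_{f^z_{uv}})$, where $s\colon(f^z_{wx}\circ f^z_{vw})\circ f^z_{uv}\Rightarrow f^z_{wx}\circ(f^z_{vw}\circ f^z_{uv})$ is the associator component. *)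

theory Defs
  imports Main
begin

text \<open>Convention: comp1 g f is g \<circ> f
(f first), vcomp b a is b \<cdot> a (a first), hcomp b a is b * a with
a : f \<Rightarrow> f', b : g \<Rightarrow> g' giving g\<circ>f \<Rightarrow> g'\<circ>f'.
assoc h g f : (h\<circ>g)\<circ>f \<Rightarrow> h\<circ>(g\<circ>f).\<close>

record ('o, 'a, 'c) bicat =
  Obj :: "'o set"
  Hom1 :: "'a set"
  src :: "'a \<Rightarrow> 'o"
  tgt :: "'a \<Rightarrow> 'o"
  Hom2 :: "'c set"
  dom2 :: "'c \<Rightarrow> 'a"
  cod2 :: "'c \<Rightarrow> 'a"
  comp1 :: "'a \<Rightarrow> 'a \<Rightarrow> 'a"
  idc :: "'o \<Rightarrow> 'a"
  vcomp :: "'c \<Rightarrow> 'c \<Rightarrow> 'c"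
  hcomp :: "'c \<Rightarrow> 'c \<Rightarrow> 'c"
  id2 :: "'a \<Rightarrow> 'c"
  assoc :: "'a \<Rightarrow> 'a \<Rightarrow> 'a \<Rightarrow> 'c"
  lunit :: "'a \<Rightarrow> 'c"
  runit :: "'a \<Rightarrow> 'c"

definition hom1 :: "('o,'a,'c,'m) bicat_scheme \<Rightarrow> 'a \<Rightarrow> 'o \<Rightarrow> 'o \<Rightarrow> bool" where
  "hom1 B f a b \<longleftrightarrow> f \<in> Hom1 B \<and> src B f = a \<and> tgt B f = b"

definition arr2 :: "('o,'a,'c,'m) bicat_scheme \<Rightarrow> 'c \<Rightarrow> 'a \<Rightarrow> 'a \<Rightarrow> bool" where
  "arr2 B \<alpha> f g \<longleftrightarrow> \<alpha> \<in> Hom2 B \<and> dom2 B \<alpha> = f \<and> cod2 B \<alpha> = g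
     \<and> f \<in> Hom1 B \<and> g \<in> Hom1 B \<and> src B f = src B g \<and> tgt B f = tgt B g"

definition iso2 :: "('o,'a,'c,'m) bicat_scheme \<Rightarrow> 'c \<Rightarrow> bool" where
  "iso2 B \<alpha> \<longleftrightarrow> \<alpha> \<in> Hom2 B \<and>
     (\<exists>\<beta>. arr2 B \<beta> (cod2 B \<alpha>) (dom2 B \<alpha>) \<and>
          vcomp B \<beta> \<alpha> = id2 B (dom2 B \<alpha>) \<and> vcomp B \<alpha> \<beta> = id2 B (cod2 B \<alpha>))"

definition bicategory :: "('o,'a,'c,'m) bicat_scheme \<Rightarrow> bool" where
  "bicategory B \<longleftrightarrow>
    (\<forall>f\<in>Hom1 B. src B f \<in> Obj B \<and> tgt B f \<in> Obj B) \<and>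
    (\<forall>a\<in>Obj B. hom1 B (idc B a) a a) \<and>
    (\<forall>f g. f \<in> Hom1 B \<and> g \<in> Hom1 B \<and> tgt B f = src B g
       \<longrightarrow> hom1 B (comp1 B g f) (src B f) (tgt B g)) \<and>
    (\<forall>\<alpha>\<in>Hom2 B. arr2 B \<alpha> (dom2 B \<alpha>) (cod2 B \<alpha>)) \<and>
    (\<forall>f\<in>Hom1 B. arr2 B (id2 B f) f f) \<and>
    (\<forall>\<alpha> \<beta> f g h. arr2 B \<alpha> f g \<and> arr2 B \<beta> g h \<longrightarrow> arr2 B (vcomp B \<beta> \<alpha>) f h) \<and>
    (\<forall>\<alpha>\<in>Hom2 B. vcomp B \<alpha> (id2 B (dom2 B \<alpha>)) = \<alpha> \<and> vcomp B (id2 B (cod2 B \<alpha>)) \<alpha> = \<alpha>) \<and>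
    (\<forall>\<alpha> \<beta> \<gamma> f g h i. arr2 B \<alpha> f g \<and> arr2 B \<beta> g h \<and> arr2 B \<gamma> h i
       \<longrightarrow> vcomp B \<gamma> (vcomp B \<beta> \<alpha>) = vcomp B (vcomp B \<gamma> \<beta>) \<alpha>) \<and>
    (\<forall>\<alpha> \<beta> f f' g g'. arr2 B \<alpha> f f' \<and> arr2 B \<beta> g g' \<and> tgt B f = src B g
       \<longrightarrow> arr2 B (hcomp B \<beta> \<alpha>) (comp1 B g f) (comp1 B g' f')) \<and>
    (\<forall>f g. f \<in> Hom1 B \<and> g \<in> Hom1 B \<and> tgt B f = src B g
       \<longrightarrow> hcomp B (id2 B g) (id2 B f) = id2 B (comp1 B g f)) \<and>
    (\<forall>\<alpha> \<alpha>' \<beta> \<beta>' f f' f'' g g' g''.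
       arr2 B \<alpha> f f' \<and> arr2 B \<alpha>' f' f'' \<and> arr2 B \<beta> g g' \<and> arr2 B \<beta>' g' g'' \<and> tgt B f = src B g
       \<longrightarrow> hcomp B (vcomp B \<beta>' \<beta>) (vcomp B \<alpha>' \<alpha>) = vcomp B (hcomp B \<beta>' \<alpha>') (hcomp B \<beta> \<alpha>)) \<and>
    (\<forall>f g h. f \<in> Hom1 B \<and> g \<in> Hom1 B \<and> h \<in> Hom1 B \<and> tgt B f = src B g \<and> tgt B g = src B h
       \<longrightarrow> arr2 B (assoc B h g f) (comp1 B (comp1 B h g) f) (comp1 B h (comp1 B g f))
           \<and> iso2 B (assoc B h g f)) \<and>
    (\<forall>\<alpha> \<beta> \<gamma> f f' g g' h h'.
       arr2 B \<alpha> f f' \<and> arr2 B \<beta> g g' \<and> arr2 B \<gamma> h h' \<and> tgt B f = src B g \<and> tgt B g = src B h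
       \<longrightarrow> vcomp B (assoc B h' g' f') (hcomp B (hcomp B \<gamma> \<beta>) \<alpha>)
           = vcomp B (hcomp B \<gamma> (hcomp B \<beta> \<alpha>)) (assoc B h g f)) \<and>
    (\<forall>f\<in>Hom1 B. arr2 B (lunit B f) (comp1 B (idc B (tgt B f)) f) f \<and> iso2 B (lunit B f)
       \<and> arr2 B (runit B f) (comp1 B f (idc B (src B f))) f \<and> iso2 B (runit B f)) \<and>
    (\<forall>\<alpha> f f'. arr2 B \<alpha> f f' \<longrightarrow>
       vcomp B (lunit B f') (hcomp B (id2 B (idc B (tgt B f))) \<alpha>) = vcomp B \<alpha> (lunit B f) \<and>
       vcomp B (runit B f') (hcomp B \<alpha> (id2 B (idc B (src B f)))) = vcomp B \<alpha> (runit B f)) \<and>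
    (\<forall>f g h k. f \<in> Hom1 B \<and> g \<in> Hom1 B \<and> h \<in> Hom1 B \<and> k \<in> Hom1 B \<and>
       tgt B f = src B g \<and> tgt B g = src B h \<and> tgt B h = src B k
       \<longrightarrow> vcomp B (assoc B k h (comp1 B g f)) (assoc B (comp1 B k h) g f)
           = vcomp B (hcomp B (id2 B k) (assoc B h g f))
               (vcomp B (assoc B k (comp1 B h g) f) (hcomp B (assoc B k h g) (id2 B f)))) \<and>
    (\<forall>f g. f \<in> Hom1 B \<and> g \<in> Hom1 B \<and> tgt B f = src B g
       \<longrightarrow> vcomp B (hcomp B (id2 B g) (lunit B f)) (assoc B g (idc B (tgt B f)) f)
           = hcomp B (runit B g) (id2 B f))"

definition axA1 where
  "axA1 B j k f \<alpha> \<iota> \<longleftrightarrow>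
    (\<forall>u v w z. u < v \<and> v < w \<and> w \<le> j \<and> 1 \<le> z \<and> z \<le> k \<longrightarrow>
       vcomp B (\<iota> z u v w) (hcomp B (\<alpha> z v w) (\<alpha> z u v)) = vcomp B (\<alpha> z u w) (\<iota> (z - 1) u v w))"

definition axA2 where
  "axA2 B j k f \<iota> \<longleftrightarrow>
    (\<forall>u v w x z. u < v \<and> v < w \<and> w < x \<and> x \<le> j \<and> z \<le> k \<longrightarrow>
       vcomp B (vcomp B (\<iota> z u w x) (hcomp B (id2 B (f z w x)) (\<iota> z u v w)))
               (assoc B (f z w x) (f z v w) (f z u v))
       = vcomp B (\<iota> z u v x) (hcomp B (\<iota> z v w x) (id2 B (f z u v))))"

text \<open>Elements of NB(j,k).  Indices: a u; f z u v = f^z_{uv}; \<alpha> z u v = \<alpha>^z_{uv};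
  \<iota> z u v w = \<iota>^z_{uvw}.  Only values at the listed indices matter.\<close>
definition NB_elem where
  "NB_elem B j k a f \<alpha> \<iota> \<longleftrightarrow>
    (\<forall>u\<le>j. a u \<in> Obj B) \<and>
    (\<forall>u v z. u < v \<and> v \<le> j \<and> z \<le> k \<longrightarrow> hom1 B (f z u v) (a u) (a v)) \<and>
    (\<forall>u v z. u < v \<and> v \<le> j \<and> 1 \<le> z \<and> z \<le> k \<longrightarrow> arr2 B (\<alpha> z u v) (f (z - 1) u v) (f z u v)) \<and>
    (\<forall>u v w z. u < v \<and> v < w \<and> w \<le> j \<and> z \<le> k \<longrightarrow>
       arr2 B (\<iota> z u v w) (comp1 B (f z v w) (f z u v)) (f z u w) \<and> iso2 B (\<iota> z u v w)) \<and>
    axA1 B j k f \<alpha> \<iota> \<and> axA2 B j k f \<iota>"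

definition ext_alpha :: "(nat \<Rightarrow> nat \<Rightarrow> 'c) \<Rightarrow> (nat \<Rightarrow> nat \<Rightarrow> nat \<Rightarrow> 'c) \<Rightarrow> nat \<Rightarrow> nat \<Rightarrow> nat \<Rightarrow> 'c" where
  "ext_alpha alpha1 \<alpha> = (\<lambda>z u v. if v = Suc u then alpha1 z u else \<alpha> z u v)"

end

theory Submission
  imports Defs
begin

text \<open>
  Given the 1-cells f, the invertible 2-cells iota satisfying (A2) and only the
  2-cells alpha between consecutive indices, axiom (A1) for a triangle (u, u+1, v)
  forces alpha(u,v) = iota(u,u+1,v) . (alpha(u+1,v) * alpha(u,u+1)) . iota'(u,u+1,v)^-1,
  where iota' is taken at the previous level z-1.  Read as a recursion on v - u this
  proves uniqueness and suggests the definition of alpha.  For existence, (A1) on a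
  general triangle (u,v,w) follows by induction on v - u: the (A1) square for
  (u+1,v,w), whiskered by alpha(u,u+1), pasted with the (A1) square for (u,u+1,w),
  is identified by (A2) at both levels with a pasting of the naturality square of the
  associator, the whiskered (A1) square for (u,u+1,v), and the desired square; the
  invertibility of the associator and of the iota's lets us cancel the first two.
\<close>

locale bicat_ctx =
  fixes B :: "('o, 'a, 'c, 'm) bicat_scheme"
  assumes bicat: "bicategory B"
begin

abbreviation vc :: "'c \<Rightarrow> 'c \<Rightarrow> 'c" (infixr "\<cdot>" 65) where "y \<cdot> x \<equiv> vcomp B y x"
abbreviation hc :: "'c \<Rightarrow> 'c \<Rightarrow> 'c" (infixr "\<star>" 70) where "y \<star> x \<equiv> hcomp B y x"
abbreviation c1 :: "'a \<Rightarrow> 'a \<Rightarrow> 'a" (infixr "\<odot>" 75) where "g \<odot> f \<equiv> comp1 B g f"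

lemma bicategory_clauses:
  shows comp1_clause: "\<forall>f g. f \<in> Hom1 B \<and> g \<in> Hom1 B \<and> tgt B f = src B g
           \<longrightarrow> hom1 B (g \<odot> f) (src B f) (tgt B g)"
    and id2_clause: "\<forall>f\<in>Hom1 B. arr2 B (id2 B f) f f"
    and vcomp_clause: "\<forall>\<alpha> \<beta> f g h. arr2 B \<alpha> f g \<and> arr2 B \<beta> g h \<longrightarrow> arr2 B (\<beta> \<cdot> \<alpha>) f h"
    and unit_clause: "\<forall>\<alpha>\<in>Hom2 B. \<alpha> \<cdot> id2 B (dom2 B \<alpha>) = \<alpha> \<and> id2 B (cod2 B \<alpha>) \<cdot> \<alpha> = \<alpha>"
    and vassoc_clause: "\<forall>\<alpha> \<beta> \<gamma> f g h i. arr2 B \<alpha> f g \<and> arr2 B \<beta> g h \<and> arr2 B \<gamma> h i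
           \<longrightarrow> \<gamma> \<cdot> (\<beta> \<cdot> \<alpha>) = (\<gamma> \<cdot> \<beta>) \<cdot> \<alpha>"
    and hcomp_clause: "\<forall>\<alpha> \<beta> f f' g g'. arr2 B \<alpha> f f' \<and> arr2 B \<beta> g g' \<and> tgt B f = src B g
           \<longrightarrow> arr2 B (\<beta> \<star> \<alpha>) (g \<odot> f) (g' \<odot> f')"
    and hid_clause: "\<forall>f g. f \<in> Hom1 B \<and> g \<in> Hom1 B \<and> tgt B f = src B g
           \<longrightarrow> id2 B g \<star> id2 B f = id2 B (g \<odot> f)"
    and interchange_clause: "\<forall>\<alpha> \<alpha>' \<beta> \<beta>' f f' f'' g g' g''.
           arr2 B \<alpha> f f' \<and> arr2 B \<alpha>' f' f'' \<and> arr2 B \<beta> g g' \<and> arr2 B \<beta>' g' g'' \<and> tgt B f = src B g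
           \<longrightarrow> (\<beta>' \<cdot> \<beta>) \<star> (\<alpha>' \<cdot> \<alpha>) = (\<beta>' \<star> \<alpha>') \<cdot> (\<beta> \<star> \<alpha>)"
    and assoc_clause: "\<forall>f g h. f \<in> Hom1 B \<and> g \<in> Hom1 B \<and> h \<in> Hom1 B \<and> tgt B f = src B g \<and> tgt B g = src B h
           \<longrightarrow> arr2 B (assoc B h g f) ((h \<odot> g) \<odot> f) (h \<odot> (g \<odot> f)) \<and> iso2 B (assoc B h g f)"
    and assoc_nat_clause: "\<forall>\<alpha> \<beta> \<gamma> f f' g g' h h'.
           arr2 B \<alpha> f f' \<and> arr2 B \<beta> g g' \<and> arr2 B \<gamma> h h' \<and> tgt B f = src B g \<and> tgt B g = src B h
           \<longrightarrow> assoc B h' g' f' \<cdot> ((\<gamma> \<star> \<beta>) \<star> \<alpha>) = (\<gamma> \<star> (\<beta> \<star> \<alpha>)) \<cdot> assoc B h g f"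
  by (insert bicat[unfolded bicategory_def]) (elim conjE, assumption)+

lemma arr2_dom_cod: "arr2 B x f g \<Longrightarrow> dom2 B x = f \<and> cod2 B x = g"
  unfolding arr2_def by simp

lemma arr2_ends: "arr2 B x f g \<Longrightarrow> f \<in> Hom1 B \<and> g \<in> Hom1 B \<and> src B f = src B g \<and> tgt B f = tgt B g"
  unfolding arr2_def by simp

lemma comp1_hom:
  assumes "f \<in> Hom1 B" "g \<in> Hom1 B" "tgt B f = src B g"
  shows Hom1_comp1: "g \<odot> f \<in> Hom1 B"
    and src_comp1: "src B (g \<odot> f) = src B f"
    and tgt_comp1: "tgt B (g \<odot> f) = tgt B g"
  using assms comp1_clause unfolding hom1_def by blast+

lemma arr_id2: "f \<in> Hom1 B \<Longrightarrow> arr2 B (id2 B f) f f"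
  using id2_clause by blast

lemma arr_vcomp: "arr2 B x f g \<Longrightarrow> arr2 B y g h \<Longrightarrow> arr2 B (y \<cdot> x) f h"
  using vcomp_clause by blast

lemma vcomp_assoc: "arr2 B x f g \<Longrightarrow> arr2 B y g h \<Longrightarrow> arr2 B w h i \<Longrightarrow> w \<cdot> (y \<cdot> x) = (w \<cdot> y) \<cdot> x"
  using vassoc_clause by blast

lemma vcomp_id:
  assumes "arr2 B x f g"
  shows vcomp_id_right: "x \<cdot> id2 B f = x" and vcomp_id_left: "id2 B g \<cdot> x = x"
  using assms unit_clause unfolding arr2_def by auto

lemma arr_hcomp: "arr2 B x f f' \<Longrightarrow> arr2 B y g g' \<Longrightarrow> tgt B f = src B g \<Longrightarrow> arr2 B (y \<star> x) (g \<odot> f) (g' \<odot> f')"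
  using hcomp_clause by blast

lemma hcomp_id2: "f \<in> Hom1 B \<Longrightarrow> g \<in> Hom1 B \<Longrightarrow> tgt B f = src B g \<Longrightarrow> id2 B g \<star> id2 B f = id2 B (g \<odot> f)"
  using hid_clause by blast

lemma interchange:
  "arr2 B x f f' \<Longrightarrow> arr2 B x' f' f'' \<Longrightarrow> arr2 B y g g' \<Longrightarrow> arr2 B y' g' g'' \<Longrightarrow> tgt B f = src B g
   \<Longrightarrow> (y' \<cdot> y) \<star> (x' \<cdot> x) = (y' \<star> x') \<cdot> (y \<star> x)"
  using interchange_clause by blast

lemma assoc_arr_iso:
  assumes "f \<in> Hom1 B" "g \<in> Hom1 B" "h \<in> Hom1 B" "tgt B f = src B g" "tgt B g = src B h"
  shows assoc_arr: "arr2 B (assoc B h g f) ((h \<odot> g) \<odot> f) (h \<odot> (g \<odot> f))"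
    and assoc_iso: "iso2 B (assoc B h g f)"
  using assms assoc_clause by blast+

lemma assoc_naturality:
  "arr2 B x f f' \<Longrightarrow> arr2 B y g g' \<Longrightarrow> arr2 B w h h' \<Longrightarrow> tgt B f = src B g \<Longrightarrow> tgt B g = src B h
   \<Longrightarrow> assoc B h' g' f' \<cdot> ((w \<star> y) \<star> x) = (w \<star> (y \<star> x)) \<cdot> assoc B h g f"
  using assoc_nat_clause by blast

definition inv2 :: "'c \<Rightarrow> 'c" where
  "inv2 x = (SOME y. arr2 B y (cod2 B x) (dom2 B x) \<and> y \<cdot> x = id2 B (dom2 B x) \<and> x \<cdot> y = id2 B (cod2 B x))"

lemma inv2:
  assumes "arr2 B x f g" "iso2 B x"
  shows "arr2 B (inv2 x) g f \<and> inv2 x \<cdot> x = id2 B f \<and> x \<cdot> inv2 x = id2 B g"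
proof -
  have ends: "dom2 B x = f" "cod2 B x = g" using arr2_dom_cod[OF assms(1)] by auto
  have "\<exists>y. arr2 B y (cod2 B x) (dom2 B x) \<and> y \<cdot> x = id2 B (dom2 B x) \<and> x \<cdot> y = id2 B (cod2 B x)"
    using assms(2) unfolding iso2_def by blast
  from someI_ex[OF this] show ?thesis unfolding inv2_def ends .
qed

lemma iso_cancel_right:
  assumes x: "arr2 B x f g" and y: "arr2 B y f g" and e: "arr2 B e h f" "iso2 B e"
    and eq: "x \<cdot> e = y \<cdot> e"
  shows "x = y"
proof -
  note e_inv = inv2[OF e]
  have "x = x \<cdot> (e \<cdot> inv2 e)" using e_inv vcomp_id_right[OF x] by simp
  also have "\<dots> = (x \<cdot> e) \<cdot> inv2 e" using vcomp_assoc e_inv e x by blast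
  also have "\<dots> = (y \<cdot> e) \<cdot> inv2 e" using eq by simp
  also have "\<dots> = y \<cdot> (e \<cdot> inv2 e)" using vcomp_assoc e_inv e y by metis
  also have "\<dots> = y" using e_inv vcomp_id_right[OF y] by simp
  finally show ?thesis .
qed

lemma iso_whisker_left:
  assumes e: "arr2 B e f f'" "iso2 B e" and g: "g \<in> Hom1 B" "tgt B f = src B g"
  shows "iso2 B (id2 B g \<star> e)"
proof -
  note e_inv = inv2[OF e]
  have ends: "f \<in> Hom1 B" "f' \<in> Hom1 B" "tgt B f' = src B g"
    using arr2_ends[OF e(1)] g by auto
  have gg: "id2 B g \<cdot> id2 B g = id2 B g" using vcomp_id_left[OF arr_id2[OF g(1)]] .
  have "arr2 B (id2 B g \<star> e) (g \<odot> f) (g \<odot> f')"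
    using arr_hcomp[OF e(1) arr_id2[OF g(1)] g(2)] .
  moreover have "arr2 B (id2 B g \<star> inv2 e) (g \<odot> f') (g \<odot> f)"
    using arr_hcomp[OF conjunct1[OF e_inv] arr_id2[OF g(1)] ends(3)] .
  moreover have "(id2 B g \<star> inv2 e) \<cdot> (id2 B g \<star> e) = id2 B (g \<odot> f)"
    using interchange[OF e(1) conjunct1[OF e_inv] arr_id2 arr_id2 g(2)] gg e_inv hcomp_id2 ends g
    by metis
  moreover have "(id2 B g \<star> e) \<cdot> (id2 B g \<star> inv2 e) = id2 B (g \<odot> f')"
    using interchange[OF conjunct1[OF e_inv] e(1) arr_id2 arr_id2 ends(3)] gg e_inv hcomp_id2 ends g
    by metis
  ultimately show ?thesis unfolding iso2_def arr2_def by auto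
qed

text \<open>
  Axiom (A1) says precisely that the iota's at levels z (top) and z-1
  (bottom) form commuting squares with the alpha's as vertical edges.
\<close>

definition square :: "'c \<Rightarrow> 'c \<Rightarrow> 'c \<Rightarrow> 'c \<Rightarrow> bool" where
  "square t l r b \<longleftrightarrow>
     (\<exists>x0 x1 y0 y1. arr2 B l x0 x1 \<and> arr2 B t x1 y1 \<and> arr2 B b x0 y0 \<and> arr2 B r y0 y1) \<and>
     t \<cdot> l = r \<cdot> b"

lemma squareI:
  "arr2 B l x0 x1 \<Longrightarrow> arr2 B t x1 y1 \<Longrightarrow> arr2 B b x0 y0 \<Longrightarrow> arr2 B r y0 y1 \<Longrightarrow> t \<cdot> l = r \<cdot> b
   \<Longrightarrow> square t l r b"
  unfolding square_def by blast

lemma square_commutes: "square t l r b \<Longrightarrow> t \<cdot> l = r \<cdot> b"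
  unfolding square_def by blast

lemma square_edges:
  assumes "square t l r b" "arr2 B l x0 x1" "arr2 B r y0 y1"
  shows "arr2 B t x1 y1 \<and> arr2 B b x0 y0"
  using assms arr2_dom_cod unfolding square_def by metis

lemma square_paste:
  assumes sq1: "square t1 l m b1" and sq2: "square t2 m r b2"
  shows "square (t2 \<cdot> t1) l r (b2 \<cdot> b1)"
proof -
  obtain x0 x1 y0 y1 where l: "arr2 B l x0 x1" and t1: "arr2 B t1 x1 y1"
      and b1: "arr2 B b1 x0 y0" and m: "arr2 B m y0 y1"
    using sq1 unfolding square_def by blast
  obtain z0 z1 where r: "arr2 B r z0 z1" and t2: "arr2 B t2 y1 z1" and b2: "arr2 B b2 y0 z0"
    using sq2 square_edges[OF sq2 m] unfolding square_def by blast
  have "(t2 \<cdot> t1) \<cdot> l = t2 \<cdot> (t1 \<cdot> l)" using vcomp_assoc[OF l t1 t2] by simp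
  also have "\<dots> = t2 \<cdot> (m \<cdot> b1)" using square_commutes[OF sq1] by simp
  also have "\<dots> = (r \<cdot> b2) \<cdot> b1"
    using vcomp_assoc[OF b1 m t2] square_commutes[OF sq2] by simp
  also have "\<dots> = r \<cdot> (b2 \<cdot> b1)" using vcomp_assoc[OF b1 b2 r] by simp
  finally show ?thesis
    using squareI[OF l arr_vcomp[OF t1 t2] arr_vcomp[OF b1 b2] r] by blast
qed

lemma square_cancel:
  assumes sq: "square (t2 \<cdot> t1) l r (b2 \<cdot> b1)" and sq1: "square t1 l m b1"
    and t1: "arr2 B t1 x1 y1" and t2: "arr2 B t2 y1 z1"
    and b1: "arr2 B b1 x0 y0" and b2: "arr2 B b2 y0 z0" and iso: "iso2 B b1"
  shows "square t2 m r b2"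
proof -
  have l: "arr2 B l x0 x1" and m: "arr2 B m y0 y1"
    using sq1 t1 b1 arr2_dom_cod unfolding square_def by metis+
  have r: "arr2 B r z0 z1"
    using sq arr_vcomp[OF t1 t2] arr_vcomp[OF b1 b2] arr2_dom_cod unfolding square_def by metis
  have "(t2 \<cdot> m) \<cdot> b1 = t2 \<cdot> (t1 \<cdot> l)"
    using vcomp_assoc[OF b1 m t2] square_commutes[OF sq1] by simp
  also have "\<dots> = r \<cdot> (b2 \<cdot> b1)" using vcomp_assoc[OF l t1 t2] square_commutes[OF sq] by simp
  also have "\<dots> = (r \<cdot> b2) \<cdot> b1" using vcomp_assoc[OF b1 b2 r] by simp
  finally have "t2 \<cdot> m = r \<cdot> b2"
    using iso_cancel_right[OF arr_vcomp[OF m t2] arr_vcomp[OF b2 r] b1 iso] by blast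
  then show ?thesis using squareI[OF m t2 b2 r] by blast
qed

lemma square_whisker_left:
  assumes sq: "square t l r b" and l: "arr2 B l x0 x1" and c: "arr2 B c g0 g1"
    and comp: "tgt B x0 = src B g0"
  shows "square (id2 B g1 \<star> t) (c \<star> l) (c \<star> r) (id2 B g0 \<star> b)"
proof -
  obtain y0 y1 where t: "arr2 B t x1 y1" and b: "arr2 B b x0 y0" and r: "arr2 B r y0 y1"
    using sq l arr2_dom_cod unfolding square_def by metis
  have g: "g0 \<in> Hom1 B" "g1 \<in> Hom1 B" "src B g1 = src B g0" using arr2_ends[OF c] by auto
  have comp': "tgt B x1 = src B g1" "tgt B y0 = src B g0" "tgt B y1 = src B g1"
    using arr2_ends[OF l] arr2_ends[OF b] arr2_ends[OF t] comp g by auto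
  have "(id2 B g1 \<star> t) \<cdot> (c \<star> l) = (id2 B g1 \<cdot> c) \<star> (t \<cdot> l)"
    using interchange[OF l t c arr_id2[OF g(2)] comp] by simp
  also have "\<dots> = (c \<cdot> id2 B g0) \<star> (r \<cdot> b)"
    using vcomp_id[OF c] square_commutes[OF sq] by simp
  also have "\<dots> = (c \<star> r) \<cdot> (id2 B g0 \<star> b)"
    using interchange[OF b r arr_id2[OF g(1)] c comp] by simp
  finally show ?thesis
    using squareI[OF arr_hcomp[OF l c comp] arr_hcomp[OF t arr_id2[OF g(2)] comp'(1)]
        arr_hcomp[OF b arr_id2[OF g(1)] comp] arr_hcomp[OF r c comp'(2)]] by blast
qed

lemma square_whisker_right:
  assumes sq: "square t l r b" and l: "arr2 B l x0 x1" and c: "arr2 B c g0 g1"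
    and comp: "tgt B g0 = src B x0"
  shows "square (t \<star> id2 B g1) (l \<star> c) (r \<star> c) (b \<star> id2 B g0)"
proof -
  obtain y0 y1 where t: "arr2 B t x1 y1" and b: "arr2 B b x0 y0" and r: "arr2 B r y0 y1"
    using sq l arr2_dom_cod unfolding square_def by metis
  have g: "g0 \<in> Hom1 B" "g1 \<in> Hom1 B" "tgt B g1 = tgt B g0" using arr2_ends[OF c] by auto
  have comp': "tgt B g1 = src B x1" "tgt B g0 = src B y0" "tgt B g1 = src B y1"
    using arr2_ends[OF l] arr2_ends[OF b] arr2_ends[OF t] comp g by auto
  have "(t \<star> id2 B g1) \<cdot> (l \<star> c) = (t \<cdot> l) \<star> (id2 B g1 \<cdot> c)"
    using interchange[OF c arr_id2[OF g(2)] l t comp] by simp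
  also have "\<dots> = (r \<cdot> b) \<star> (c \<cdot> id2 B g0)"
    using vcomp_id[OF c] square_commutes[OF sq] by simp
  also have "\<dots> = (r \<star> c) \<cdot> (b \<star> id2 B g0)"
    using interchange[OF arr_id2[OF g(1)] c b r comp] by simp
  finally show ?thesis
    using squareI[OF arr_hcomp[OF c l comp] arr_hcomp[OF arr_id2[OF g(2)] t comp'(1)]
        arr_hcomp[OF arr_id2[OF g(1)] b comp] arr_hcomp[OF c r comp'(2)]] by blast
qed

lemma square_assoc:
  assumes x: "arr2 B x f f'" and y: "arr2 B y g g'" and w: "arr2 B w h h'"
    and fg: "tgt B f = src B g" and gh: "tgt B g = src B h"
  shows "square (assoc B h' g' f') ((w \<star> y) \<star> x) (w \<star> (y \<star> x)) (assoc B h g f)"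
proof -
  have ends: "f \<in> Hom1 B" "g \<in> Hom1 B" "h \<in> Hom1 B" "f' \<in> Hom1 B" "g' \<in> Hom1 B" "h' \<in> Hom1 B"
    and fg': "tgt B f' = src B g'" and gh': "tgt B g' = src B h'"
    using arr2_ends[OF x] arr2_ends[OF y] arr2_ends[OF w] fg gh by auto
  have "tgt B f = src B (h \<odot> g)" using src_comp1[OF ends(2,3) gh] fg by simp
  then have l: "arr2 B ((w \<star> y) \<star> x) ((h \<odot> g) \<odot> f) ((h' \<odot> g') \<odot> f')"
    using arr_hcomp[OF x arr_hcomp[OF y w gh]] by blast
  have "tgt B (g \<odot> f) = src B h" using tgt_comp1[OF ends(1,2) fg] gh by simp
  then have r: "arr2 B (w \<star> (y \<star> x)) (h \<odot> (g \<odot> f)) (h' \<odot> (g' \<odot> f'))"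
    using arr_hcomp[OF arr_hcomp[OF x y fg] w] by blast
  show ?thesis
    using squareI[OF l assoc_arr[OF ends(4-6) fg' gh'] assoc_arr[OF ends(1-3) fg gh] r]
      assoc_naturality[OF x y w fg gh] by blast
qed

end

locale NB_extension = bicat_ctx B for B :: "('o, 'a, 'c, 'm) bicat_scheme" +
  fixes j k :: nat and a :: "nat \<Rightarrow> 'o" and f :: "nat \<Rightarrow> nat \<Rightarrow> nat \<Rightarrow> 'a"
    and alpha1 :: "nat \<Rightarrow> nat \<Rightarrow> 'c" and \<iota> :: "nat \<Rightarrow> nat \<Rightarrow> nat \<Rightarrow> nat \<Rightarrow> 'c"
  assumes obj: "\<forall>u\<le>j. a u \<in> Obj B"
    and one_cells: "\<forall>u v z. u < v \<and> v \<le> j \<and> z \<le> k \<longrightarrow> hom1 B (f z u v) (a u) (a v)"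
    and alpha1_typ: "\<forall>u z. u < j \<and> 1 \<le> z \<and> z \<le> k \<longrightarrow>
                       arr2 B (alpha1 z u) (f (z - 1) u (Suc u)) (f z u (Suc u))"
    and iota_typ: "\<forall>u v w z. u < v \<and> v < w \<and> w \<le> j \<and> z \<le> k \<longrightarrow>
                     arr2 B (\<iota> z u v w) (comp1 B (f z v w) (f z u v)) (f z u w) \<and> iso2 B (\<iota> z u v w)"
    and A2: "axA2 B j k f \<iota>"
begin

lemma one_cell:
  assumes "u < v" "v \<le> j" "z \<le> k"
  shows f_Hom1: "f z u v \<in> Hom1 B" and src_f: "src B (f z u v) = a u" and tgt_f: "tgt B (f z u v) = a v"
  using assms one_cells unfolding hom1_def by blast+

lemmas cell_simps = f_Hom1 src_f tgt_f Hom1_comp1 src_comp1 tgt_comp1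

lemma iota:
  assumes "u < v" "v < w" "w \<le> j" "z \<le> k"
  shows iota_arr: "arr2 B (\<iota> z u v w) (f z v w \<odot> f z u v) (f z u w)"
    and iota_iso: "iso2 B (\<iota> z u v w)"
  using assms iota_typ by blast+

lemma A2_cells:
  assumes "u < v" "v < w" "w < x" "x \<le> j" "z \<le> k"
  shows iota_whisker_arr:
      "arr2 B (id2 B (f z w x) \<star> \<iota> z u v w) (f z w x \<odot> (f z v w \<odot> f z u v)) (f z w x \<odot> f z u w)"
    and iota_whisker_iso: "iso2 B (id2 B (f z w x) \<star> \<iota> z u v w)"
    and A2_lhs_arr: "arr2 B (\<iota> z u w x \<cdot> (id2 B (f z w x) \<star> \<iota> z u v w))
                       (f z w x \<odot> (f z v w \<odot> f z u v)) (f z u x)"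
    and assoc_f_arr: "arr2 B (assoc B (f z w x) (f z v w) (f z u v))
                        ((f z w x \<odot> f z v w) \<odot> f z u v) (f z w x \<odot> (f z v w \<odot> f z u v))"
    and assoc_f_iso: "iso2 B (assoc B (f z w x) (f z v w) (f z u v))"
proof -
  have "tgt B (f z v w \<odot> f z u v) = src B (f z w x)" "tgt B (f z u w) = src B (f z w x)"
    using assms by (simp_all add: cell_simps)
  then show whisker: "arr2 B (id2 B (f z w x) \<star> \<iota> z u v w) (f z w x \<odot> (f z v w \<odot> f z u v)) (f z w x \<odot> f z u w)"
    "iso2 B (id2 B (f z w x) \<star> \<iota> z u v w)"
    using arr_hcomp[OF iota_arr arr_id2] iso_whisker_left[OF iota_arr iota_iso] assms
    by (simp_all add: cell_simps)
  have "arr2 B (\<iota> z u w x) (f z w x \<odot> f z u w) (f z u x)"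
    using iota_arr assms by simp
  then show "arr2 B (\<iota> z u w x \<cdot> (id2 B (f z w x) \<star> \<iota> z u v w)) (f z w x \<odot> (f z v w \<odot> f z u v)) (f z u x)"
    using arr_vcomp[OF whisker(1)] by blast
  show "arr2 B (assoc B (f z w x) (f z v w) (f z u v))
          ((f z w x \<odot> f z v w) \<odot> f z u v) (f z w x \<odot> (f z v w \<odot> f z u v))"
    "iso2 B (assoc B (f z w x) (f z v w) (f z u v))"
    using assoc_arr_iso assms by (simp_all add: cell_simps)
qed

lemma A2_at:
  "u < v \<Longrightarrow> v < w \<Longrightarrow> w < x \<Longrightarrow> x \<le> j \<Longrightarrow> z \<le> k \<Longrightarrow>
   (\<iota> z u w x \<cdot> (id2 B (f z w x) \<star> \<iota> z u v w)) \<cdot> assoc B (f z w x) (f z v w) (f z u v)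
   = \<iota> z u v x \<cdot> (\<iota> z v w x \<star> id2 B (f z u v))"
  using A2 unfolding axA2_def by blast

text \<open>The candidate for the missing 2-cells: filler d z u is alpha^z_{u,u+d+1}, defined by
  recursion on d as the unique solution of (A1) on the triangle (u, u+1, u+d+1).\<close>

primrec filler :: "nat \<Rightarrow> nat \<Rightarrow> nat \<Rightarrow> 'c" where
  "filler 0 z u = alpha1 z u"
| "filler (Suc d) z u =
     (\<iota> z u (Suc u) (u + d + 2) \<cdot> (filler d z (Suc u) \<star> alpha1 z u)) \<cdot> inv2 (\<iota> (z - 1) u (Suc u) (u + d + 2))"

definition alpha :: "nat \<Rightarrow> nat \<Rightarrow> nat \<Rightarrow> 'c" where
  "alpha z u v = filler (v - Suc u) z u"

lemma alpha_consecutive: "alpha z u (Suc u) = alpha1 z u"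
  unfolding alpha_def by simp

lemma alpha_recursion:
  assumes "Suc u < v"
  shows "alpha z u v = (\<iota> z u (Suc u) v \<cdot> (alpha z (Suc u) v \<star> alpha z u (Suc u))) \<cdot> inv2 (\<iota> (z - 1) u (Suc u) v)"
proof -
  have "v - Suc u = Suc (v - Suc (Suc u))" and "u + (v - Suc (Suc u)) + 2 = v" using assms by auto
  then show ?thesis unfolding alpha_def by simp
qed

lemma ext_alpha_alpha: "ext_alpha alpha1 alpha = alpha"
  unfolding ext_alpha_def by (simp add: alpha_consecutive fun_eq_iff)

lemma alpha_arr: "u < v \<Longrightarrow> v \<le> j \<Longrightarrow> 1 \<le> z \<Longrightarrow> z \<le> k \<Longrightarrow> arr2 B (alpha z u v) (f (z - 1) u v) (f z u v)"
proof (induction "v - Suc u" arbitrary: u)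
  case 0
  then have "v = Suc u" by simp
  then show ?case using 0 alpha1_typ alpha_consecutive by auto
next
  case (Suc d)
  then have uv: "Suc u < v" by simp
  have "arr2 B (alpha z (Suc u) v) (f (z - 1) (Suc u) v) (f z (Suc u) v)"
    using Suc uv by simp
  moreover have "arr2 B (alpha z u (Suc u)) (f (z - 1) u (Suc u)) (f z u (Suc u))"
    using alpha1_typ alpha_consecutive Suc.prems uv by simp
  ultimately have "arr2 B (alpha z (Suc u) v \<star> alpha z u (Suc u))
          (f (z - 1) (Suc u) v \<odot> f (z - 1) u (Suc u)) (f z (Suc u) v \<odot> f z u (Suc u))"
    using arr_hcomp Suc.prems uv by (simp add: cell_simps)
  moreover have "arr2 B (inv2 (\<iota> (z - 1) u (Suc u) v)) (f (z - 1) u v) (f (z - 1) (Suc u) v \<odot> f (z - 1) u (Suc u))"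
    using inv2[OF iota_arr iota_iso] Suc.prems uv by simp
  moreover have "arr2 B (\<iota> z u (Suc u) v) (f z (Suc u) v \<odot> f z u (Suc u)) (f z u v)"
    using iota_arr Suc.prems uv by simp
  ultimately show ?case
    unfolding alpha_recursion[OF uv] by (blast intro: arr_vcomp)
qed

abbreviation A1_square :: "nat \<Rightarrow> nat \<Rightarrow> nat \<Rightarrow> nat \<Rightarrow> bool" where
  "A1_square z u v w \<equiv>
     square (\<iota> z u v w) (alpha z v w \<star> alpha z u v) (alpha z u w) (\<iota> (z - 1) u v w)"

lemma alpha_hcomp_arr:
  assumes "u < v" "v < w" "w \<le> j" "1 \<le> z" "z \<le> k"
  shows "arr2 B (alpha z v w \<star> alpha z u v) (f (z - 1) v w \<odot> f (z - 1) u v) (f z v w \<odot> f z u v)"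
  using arr_hcomp[OF alpha_arr alpha_arr] assms by (simp add: cell_simps)

lemma A1_squareI:
  assumes "u < v" "v < w" "w \<le> j" "1 \<le> z" "z \<le> k"
    and "\<iota> z u v w \<cdot> (alpha z v w \<star> alpha z u v) = alpha z u w \<cdot> \<iota> (z - 1) u v w"
  shows "A1_square z u v w"
  using squareI[OF alpha_hcomp_arr iota_arr iota_arr alpha_arr] assms by simp

lemma A1_first:
  assumes uw: "Suc u < w" "w \<le> j" and z: "1 \<le> z" "z \<le> k"
  shows "A1_square z u (Suc u) w"
proof (rule A1_squareI)
  let ?top = "\<iota> z u (Suc u) w \<cdot> (alpha z (Suc u) w \<star> alpha z u (Suc u))"
    and ?bot = "\<iota> (z - 1) u (Suc u) w"
  have top: "arr2 B ?top (f (z - 1) (Suc u) w \<odot> f (z - 1) u (Suc u)) (f z u w)"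
    using arr_vcomp[OF alpha_hcomp_arr iota_arr] assms by simp
  have bot: "arr2 B ?bot (f (z - 1) (Suc u) w \<odot> f (z - 1) u (Suc u)) (f (z - 1) u w)" "iso2 B ?bot"
    using iota assms by simp_all
  note bot_inv = inv2[OF bot]
  have "alpha z u w \<cdot> ?bot = (?top \<cdot> inv2 ?bot) \<cdot> ?bot"
    using alpha_recursion uw by simp
  also have "\<dots> = ?top \<cdot> (inv2 ?bot \<cdot> ?bot)"
    using vcomp_assoc[OF bot(1) conjunct1[OF bot_inv] top] by simp
  also have "\<dots> = ?top"
    using bot_inv vcomp_id_right[OF top] by simp
  finally show "?top = alpha z u w \<cdot> ?bot" by simp
qed (use assms in auto)

text \<open>The (A1)
  square of (u+1,v,w) whiskered by alpha(u,u+1), pasted with that of (u,u+1,w), has by (A2)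
  at levels z and z-1 the same edges as the pasting of the associator square, the
  (A1) square of (u,u+1,v) whiskered by alpha(v,w) and the desired square; the first
  two have invertible bottom edges and are cancelled.\<close>

lemma A1_step:
  assumes uv: "Suc u < v" and vw: "v < w" "w \<le> j" and z: "1 \<le> z" "z \<le> k"
    and IH: "A1_square z (Suc u) v w"
  shows "A1_square z u v w"
proof -
  let ?y = "z - 1"
  have a: "arr2 B (alpha z u (Suc u)) (f ?y u (Suc u)) (f z u (Suc u))"
    and b: "arr2 B (alpha z (Suc u) v) (f ?y (Suc u) v) (f z (Suc u) v)"
    and c: "arr2 B (alpha z v w) (f ?y v w) (f z v w)"
    using alpha_arr assms by simp_all
  have sq_uv: "A1_square z u (Suc u) v" and sq_uw: "A1_square z u (Suc u) w"
    using A1_first assms by simp_all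
  have left: "square (id2 B (f z v w) \<star> \<iota> z u (Suc u) v)
      (alpha z v w \<star> (alpha z (Suc u) v \<star> alpha z u (Suc u))) (alpha z v w \<star> alpha z u v)
      (id2 B (f ?y v w) \<star> \<iota> ?y u (Suc u) v)"
    using square_whisker_left[OF sq_uv alpha_hcomp_arr c] assms by (simp add: cell_simps)
  have right: "square (\<iota> z (Suc u) v w \<star> id2 B (f z u (Suc u)))
      ((alpha z v w \<star> alpha z (Suc u) v) \<star> alpha z u (Suc u)) (alpha z (Suc u) w \<star> alpha z u (Suc u))
      (\<iota> ?y (Suc u) v w \<star> id2 B (f ?y u (Suc u)))"
    using square_whisker_right[OF IH alpha_hcomp_arr a] assms by (simp add: cell_simps)
  have "square ((\<iota> z u v w \<cdot> (id2 B (f z v w) \<star> \<iota> z u (Suc u) v))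
                  \<cdot> assoc B (f z v w) (f z (Suc u) v) (f z u (Suc u)))
      ((alpha z v w \<star> alpha z (Suc u) v) \<star> alpha z u (Suc u)) (alpha z u w)
      ((\<iota> ?y u v w \<cdot> (id2 B (f ?y v w) \<star> \<iota> ?y u (Suc u) v))
                  \<cdot> assoc B (f ?y v w) (f ?y (Suc u) v) (f ?y u (Suc u)))"
    using square_paste[OF right sq_uw] A2_at[of u "Suc u" v w z] A2_at[of u "Suc u" v w ?y] assms
    by simp
  then have "square (\<iota> z u v w \<cdot> (id2 B (f z v w) \<star> \<iota> z u (Suc u) v))
      (alpha z v w \<star> (alpha z (Suc u) v \<star> alpha z u (Suc u))) (alpha z u w)
      (\<iota> ?y u v w \<cdot> (id2 B (f ?y v w) \<star> \<iota> ?y u (Suc u) v))"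
    using square_cancel[OF _ square_assoc[OF a b c] assoc_f_arr A2_lhs_arr assoc_f_arr A2_lhs_arr
        assoc_f_iso] assms by (simp add: cell_simps)
  then show ?thesis
    using square_cancel[OF _ left iota_whisker_arr iota_arr iota_whisker_arr iota_arr iota_whisker_iso]
      assms by simp
qed

lemma A1_holds: "u < v \<Longrightarrow> v < w \<Longrightarrow> w \<le> j \<Longrightarrow> 1 \<le> z \<Longrightarrow> z \<le> k \<Longrightarrow> A1_square z u v w"
proof (induction "v - Suc u" arbitrary: u)
  case 0
  then have "v = Suc u" by simp
  then show ?case using A1_first 0 by simp
next
  case (Suc d)
  then show ?case using A1_step[of u v w z] by simp
qed

lemma NB_elem_alpha: "NB_elem B j k a f alpha \<iota>"
  unfolding NB_elem_def axA1_def
  using obj one_cells alpha_arr iota_typ A2 A1_holds[THEN square_commutes] by auto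

text \<open>Uniqueness: a family satisfying (A1) and agreeing with alpha1 on consecutive indices
  coincides with alpha, by induction on v - u, cancelling the invertible iota at level z-1.\<close>

lemma alpha_unique:
  assumes nb: "NB_elem B j k a f \<gamma> \<iota>" and consecutive: "\<And>z u. \<gamma> z u (Suc u) = alpha1 z u"
  shows "u < v \<Longrightarrow> v \<le> j \<Longrightarrow> 1 \<le> z \<Longrightarrow> z \<le> k \<Longrightarrow> \<gamma> z u v = alpha z u v"
proof (induction "v - Suc u" arbitrary: u)
  case 0
  then have "v = Suc u" by simp
  then show ?case using consecutive alpha_consecutive by simp
next
  case (Suc d)
  then have uv: "Suc u < v" by simp
  have \<gamma>_arr: "arr2 B (\<gamma> z u v) (f (z - 1) u v) (f z u v)"
    using nb Suc.prems unfolding NB_elem_def by auto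
  have "axA1 B j k f \<gamma> \<iota>" using nb unfolding NB_elem_def by simp
  then have "\<gamma> z u v \<cdot> \<iota> (z - 1) u (Suc u) v = \<iota> z u (Suc u) v \<cdot> (\<gamma> z (Suc u) v \<star> \<gamma> z u (Suc u))"
    using uv Suc.prems unfolding axA1_def by (metis lessI)
  also have "\<dots> = \<iota> z u (Suc u) v \<cdot> (alpha z (Suc u) v \<star> alpha z u (Suc u))"
    using Suc uv consecutive alpha_consecutive by simp
  also have "\<dots> = alpha z u v \<cdot> \<iota> (z - 1) u (Suc u) v"
    using square_commutes[OF A1_first] uv Suc.prems by simp
  finally have eq: "\<gamma> z u v \<cdot> \<iota> (z - 1) u (Suc u) v = alpha z u v \<cdot> \<iota> (z - 1) u (Suc u) v" .
  have "arr2 B (alpha z u v) (f (z - 1) u v) (f z u v)"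
    and "arr2 B (\<iota> (z - 1) u (Suc u) v) (f (z - 1) (Suc u) v \<odot> f (z - 1) u (Suc u)) (f (z - 1) u v)"
    and "iso2 B (\<iota> (z - 1) u (Suc u) v)"
    using alpha_arr iota uv Suc.prems by simp_all
  then show ?case using iso_cancel_right[OF \<gamma>_arr _ _ _ eq] by blast
qed

end

theorem mainTheorem16:
  fixes B :: "('o, 'a, 'c, 'm) bicat_scheme"
    and j k :: nat
    and a :: "nat \<Rightarrow> 'o"
    and f :: "nat \<Rightarrow> nat \<Rightarrow> nat \<Rightarrow> 'a"
    and alpha1 :: "nat \<Rightarrow> nat \<Rightarrow> 'c"
    and \<iota> :: "nat \<Rightarrow> nat \<Rightarrow> nat \<Rightarrow> nat \<Rightarrow> 'c"
  assumes bicat: "bicategory B"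
    and obj: "\<forall>u\<le>j. a u \<in> Obj B"
    and one_cells: "\<forall>u v z. u < v \<and> v \<le> j \<and> z \<le> k \<longrightarrow> hom1 B (f z u v) (a u) (a v)"
    and alpha1_typ: "\<forall>u z. u < j \<and> 1 \<le> z \<and> z \<le> k \<longrightarrow>
                       arr2 B (alpha1 z u) (f (z - 1) u (Suc u)) (f z u (Suc u))"
    and iota_typ: "\<forall>u v w z. u < v \<and> v < w \<and> w \<le> j \<and> z \<le> k \<longrightarrow>
                     arr2 B (\<iota> z u v w) (comp1 B (f z v w) (f z u v)) (f z u w) \<and> iso2 B (\<iota> z u v w)"
    and A2: "axA2 B j k f \<iota>"
  shows "\<exists>\<alpha>. NB_elem B j k a f (ext_alpha alpha1 \<alpha>) \<iota> \<and>
           (\<forall>\<beta>. NB_elem B j k a f (ext_alpha alpha1 \<beta>) \<iota> \<longrightarrow>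
              (\<forall>z u v. 1 \<le> z \<and> z \<le> k \<and> Suc u < v \<and> v \<le> j \<longrightarrow> \<beta> z u v = \<alpha> z u v))"
proof -
  interpret NB_extension B j k a f alpha1 \<iota>
    by (unfold_locales; fact assms)
  show ?thesis
  proof (intro exI conjI allI impI)
    show "NB_elem B j k a f (ext_alpha alpha1 alpha) \<iota>"
      using NB_elem_alpha ext_alpha_alpha by simp
    fix \<beta> z u v
    assume nb: "NB_elem B j k a f (ext_alpha alpha1 \<beta>) \<iota>"
      and idx: "1 \<le> z \<and> z \<le> k \<and> Suc u < v \<and> v \<le> j"
    have "\<And>z u. ext_alpha alpha1 \<beta> z u (Suc u) = alpha1 z u"
      unfolding ext_alpha_def by simp
    then have "ext_alpha alpha1 \<beta> z u v = alpha z u v"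
      using alpha_unique[OF nb, of u v z] idx by simp
    then show "\<beta> z u v = alpha z u v" using idx unfolding ext_alpha_def by simp
  qed
qed

end
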